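(* Let $n\ge2$ be an integer and $q=1/n$. Let $\mathcal{I}_2$ be the instance of the online volunteer notification problem with $V=n$ volunteers, $S=1$ task type, $T=n^2+1$, $g(\tau)=q(1-q)^{\tau-1}$ for $\tau\in\mathbb{N}$, arrival probabilities $\lambda_{1,1}=1$ and $\lambda_{1,t}=q$ for $2\le t\le T$, and match probabilities $p_{v,1}=q$ for all $v\in[V]$. Then the expected number of tasks completed by any online policy on $\mathcal{I}_2$ is at most $\Big[1+q-\frac{q(1-q)}{\log\left(\frac{1}{1-q}\right)(1+q)}\left(1-e^{-1}\right)\Big]\mathbf{LP}_{\mathcal{I}_2}$.
   Context: Online volunteer notification problem. An instance $\mathcal{I}$ consists of volunteers $[V]$, task types $[S]$, horizon $T$, arrival probabilities $\lambda_{s,t}\ge0$ with $\sum_s\lambda_{s,t}\le1$, match probabilities $p_{v,s}\in[0,1]$, and a probability mass function $g$ on the positive integers with CDF $G(\tau)=\sum_{i\le\tau}g(i)$, $G(0)=0$. In each period $t$ at most one task arrives, of type $s$ with probability $\lambda_{s,t}$, independently across periods. All volunteers start active. Upon an arrival the platform immediately and irrevocably notifies a subset of volunteers; each notified active volunteer $v$ responds positively independently with probability $p_{v,s}$; the task is completed iff at least one does. A volunteer active and notified at time $t$ becomes inactive (regardless of response) and active again at $t+Z$, $Z\sim g$ independent; inactive volunteers ignore notifications and are unaffected by them. The platform knows $\lambda,p,g$ but not states; an online policy decides whom to notify using only information available up to the current period. $\mathbf{LP}_{\mathcal{I}}=\max\sum_{t,s}\lambda_{s,t}\min\{\sum_vx_{v,s,t}p_{v,s},1\}$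 subject to $0\le x_{v,s,t}\le1$ and $\sum_{\tau=1}^t\sum_s\lambda_{s,\tau}x_{v,s,\tau}(1-G(t-\tau))\le1$ for all $v,t$. *)

theory Defs
  imports "HOL-Probability.Probability"
begin

(* Volunteers are 1..V, task types 1..S, periods 1..T.
   lam s t = arrival probability of type s in period t; p v s = match probability;
   g = pmf of the reactivation delay Z (supported on positive integers). *)

definition cdfG :: "nat pmf \<Rightarrow> nat \<Rightarrow> real" where
  "cdfG g \<tau> = (\<Sum>i\<in>{1..\<tau>}. pmf g i)"

(* distribution of the arrival in period t: None = no arrival, Some s = task of type s *)
definition arrival_pmf :: "nat \<Rightarrow> (nat \<Rightarrow> nat \<Rightarrow> real) \<Rightarrow> nat \<Rightarrow> nat option pmf" where
  "arrival_pmf S lam t = embed_pmf (\<lambda>a. case a of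
       None \<Rightarrow> 1 - (\<Sum>s\<in>{1..S}. lam s t)
     | Some s \<Rightarrow> (if s \<in> {1..S} then lam s t else 0))"

(* Information observed by the platform in a period: nothing arrived, or
   (type of the arrived task, set of notified volunteers, set of volunteers
   who responded positively). *)
type_synonym history = "(nat \<times> nat set \<times> nat set) option list"

(* A (deterministic) online policy: given the observed history of all previous
   periods and the type of the current arrival, choose the set to notify. *)
type_synonym policy = "history \<Rightarrow> nat \<Rightarrow> nat set"

(* run ... k t ret h : distribution of the number of tasks completed during the
   k periods t, t+1, ..., t+k-1, when volunteer v is active at time t' iff ret v \<le> t'
   and the observed history so far is h. *)
primrec run :: "nat \<Rightarrow> nat \<Rightarrow> (nat \<Rightarrow> nat \<Rightarrow> real) \<Rightarrow> (nat \<Rightarrow> nat \<Rightarrow> real) \<Rightarrow> nat pmf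
    \<Rightarrow> policy \<Rightarrow> nat \<Rightarrow> nat \<Rightarrow> (nat \<Rightarrow> nat) \<Rightarrow> history \<Rightarrow> real pmf" where
  "run V S lam p g pol 0 t ret h = return_pmf 0"
| "run V S lam p g pol (Suc k) t ret h =
     bind_pmf (arrival_pmf S lam t) (\<lambda>a. case a of
        None \<Rightarrow> run V S lam p g pol k (Suc t) ret (h @ [None])
      | Some s \<Rightarrow>
          (let N = pol h s \<inter> {1..V};
               A = {v \<in> N. ret v \<le> t}
           in bind_pmf (Pi_pmf A False (\<lambda>v. bernoulli_pmf (p v s))) (\<lambda>r.
              bind_pmf (Pi_pmf A 0 (\<lambda>v. g)) (\<lambda>z.
                let P = {v \<in> A. r v};
                    ret' = (\<lambda>v. if v \<in> A then t + z v else ret v)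
                in map_pmf (\<lambda>x. (if P = {} then 0 else 1) + x)
                     (run V S lam p g pol k (Suc t) ret' (h @ [Some (s, N, P)]))))))"

(* expected number of tasks completed by policy pol over periods 1..T; all volunteers start active *)
definition expected_completed :: "nat \<Rightarrow> nat \<Rightarrow> nat \<Rightarrow> (nat \<Rightarrow> nat \<Rightarrow> real) \<Rightarrow> (nat \<Rightarrow> nat \<Rightarrow> real)
    \<Rightarrow> nat pmf \<Rightarrow> policy \<Rightarrow> real" where
  "expected_completed V S T lam p g pol =
     measure_pmf.expectation (run V S lam p g pol T 1 (\<lambda>_. 0) []) (\<lambda>x. x)"

definition lp_feasible :: "nat \<Rightarrow> nat \<Rightarrow> nat \<Rightarrow> (nat \<Rightarrow> nat \<Rightarrow> real) \<Rightarrow> nat pmf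
    \<Rightarrow> (nat \<Rightarrow> nat \<Rightarrow> nat \<Rightarrow> real) \<Rightarrow> bool" where
  "lp_feasible V S T lam g x \<longleftrightarrow>
     (\<forall>v\<in>{1..V}. \<forall>s\<in>{1..S}. \<forall>t\<in>{1..T}. 0 \<le> x v s t \<and> x v s t \<le> 1) \<and>
     (\<forall>v\<in>{1..V}. \<forall>t\<in>{1..T}.
        (\<Sum>\<tau>\<in>{1..t}. \<Sum>s\<in>{1..S}. lam s \<tau> * x v s \<tau> * (1 - cdfG g (t - \<tau>))) \<le> 1)"

definition lp_obj :: "nat \<Rightarrow> nat \<Rightarrow> nat \<Rightarrow> (nat \<Rightarrow> nat \<Rightarrow> real) \<Rightarrow> (nat \<Rightarrow> nat \<Rightarrow> real)
    \<Rightarrow> (nat \<Rightarrow> nat \<Rightarrow> nat \<Rightarrow> real) \<Rightarrow> real" where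
  "lp_obj V S T lam p x =
     (\<Sum>t\<in>{1..T}. \<Sum>s\<in>{1..S}. lam s t * min (\<Sum>v\<in>{1..V}. x v s t * p v s) 1)"

definition LP :: "nat \<Rightarrow> nat \<Rightarrow> nat \<Rightarrow> (nat \<Rightarrow> nat \<Rightarrow> real) \<Rightarrow> (nat \<Rightarrow> nat \<Rightarrow> real)
    \<Rightarrow> nat pmf \<Rightarrow> real" where
  "LP V S T lam p g = Sup {lp_obj V S T lam p x | x. lp_feasible V S T lam g x}"

end

(*
  The LP optimum is n + 1: notifying everybody in every period is feasible, because
  sum_(tau <= t) lambda_tau (1 - q)^(t - tau) = 1 for every t, and no solution earns more
  than sum_t lambda_t = n + 1.

  For an online policy, geometric delays are memoryless: given the history, each volunteer
  not known to be active returns in every period independently with probability q. Let H(a)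
  be the probability that the next task is served when everybody is notified, a volunteers
  are active and the others have just become inactive. Averaged over this belief, at most
  k G + H(a) tasks are completed in the last k periods, where G = q H'(0) and H' is H one
  period later; this follows by backward induction from a one-step Bellman inequality whose
  core is a binomial-coefficient estimate. Starting with all volunteers active gives at most
  1 - (1 - q)^n + (n + 1) G / q completions, and comparing the series for G with the integral
  of exp (- n L (1 - x)), L = ln (1 / (1 - q)), bounds G / q from above by
  1 - (1 - q) (1 - 1/e) / (n L).
*)
theory Submission
  imports Defs
begin

section \<open>A binomial-coefficient estimate\<close>

lemma sum_inverse_Suc_Suc_fact:
  "(\<Sum>k\<le>K. 1 / ((real k + 2) * fact k)) = 1 - 1 / fact (K + 2)"
proof -
  have "1 / ((real k + 2) * fact k) = 1 / fact (Suc k) - 1 / fact (Suc (Suc k))" for k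
  proof -
    have partial_fractions: "1 / ((x + 2) * F) = 1 / ((x + 1) * F) - 1 / ((x + 2) * ((x + 1) * F))"
      if "0 \<le> x" "0 < F" for x F :: real
      using that by (simp add: divide_simps)
    have "(fact (Suc k) :: real) = (real k + 1) * fact k"
      and "(fact (Suc (Suc k)) :: real) = (real k + 2) * ((real k + 1) * fact k)"
      by (simp_all add: algebra_simps)
    then show ?thesis by (simp only:) (rule partial_fractions; simp)
  qed
  then have "(\<Sum>k\<le>K. 1 / ((real k + 2) * fact k))
      = (\<Sum>k\<le>K. 1 / fact (Suc k) - 1 / fact (Suc (Suc k)))"
    by (simp only:)
  also have "\<dots> = 1 / fact (Suc 0) - 1 / fact (Suc (Suc K))"
    by (rule sum_telescope)
  finally show ?thesis by (simp add: numeral_2_eq_2)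
qed

lemma choose_div_power_le_inverse_fact:
  assumes "m \<le> N"
  shows "real (m choose k) / real N ^ k \<le> 1 / fact k"
proof (cases "N = 0")
  case True
  then show ?thesis using assms by (cases k) auto
next
  case False
  have "(m choose k) * fact k \<le> m ^ k" by (rule binomial_fact_pow)
  also have "\<dots> \<le> N ^ k" using assms by (simp add: power_mono)
  finally have "real (m choose k) * fact k \<le> real N ^ k"
    by (metis of_nat_fact of_nat_le_iff of_nat_mult of_nat_power)
  then show ?thesis using False by (simp add: field_simps)
qed

lemma choose_Suc_increment_sum_le:
  assumes "1 \<le> N" "m \<le> N"
  shows "(\<Sum>i\<le>Suc N. (real (Suc m choose i) - real (m choose i)) / ((real i + 1) * real N ^ i))
    \<le> 1 / real N"
proof -
  have "(\<Sum>i\<le>Suc N. (real (Suc m choose i) - real (m choose i)) / ((real i + 1) * real N ^ i))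
      = (\<Sum>i\<le>N. (real (Suc m choose Suc i) - real (m choose Suc i))
          / ((real (Suc i) + 1) * real N ^ Suc i))"
    by (subst sum.atMost_Suc_shift) simp
  also have "\<dots> = (\<Sum>i\<le>N. real (m choose i) / ((real i + 2) * real N ^ i)) / real N"
    unfolding sum_divide_distrib using assms(1) by (intro sum.cong) (auto simp: field_simps)
  also have "\<dots> \<le> (\<Sum>i\<le>N. 1 / ((real i + 2) * fact i)) / real N"
  proof (intro divide_right_mono sum_mono)
    fix i
    have "real (m choose i) / ((real i + 2) * real N ^ i) = (real (m choose i) / real N ^ i) / (real i + 2)"
      by simp
    also have "\<dots> \<le> (1 / fact i) / (real i + 2)"
      by (intro divide_right_mono choose_div_power_le_inverse_fact assms) auto
    finally show "real (m choose i) / ((real i + 2) * real N ^ i) \<le> 1 / ((real i + 2) * fact i)"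
      by (simp add: mult.commute)
  qed simp
  also have "\<dots> \<le> 1 / real N"
    using assms(1) by (intro divide_right_mono) (auto simp: sum_inverse_Suc_Suc_fact)
  finally show ?thesis .
qed

lemma choose_increment_sum_le:
  assumes "1 \<le> N" "m + d \<le> Suc N"
  shows "(\<Sum>i\<le>Suc N. (real ((m + d) choose i) - real (m choose i)) / ((real i + 1) * real N ^ i))
    \<le> real d / real N"
  using assms(2)
proof (induction d)
  case (Suc d)
  let ?w = "\<lambda>i. (real i + 1) * real N ^ i"
  have "(\<Sum>i\<le>Suc N. (real ((m + Suc d) choose i) - real (m choose i)) / ?w i)
      = (\<Sum>i\<le>Suc N. (real (Suc (m + d) choose i) - real ((m + d) choose i)) / ?w i)
        + (\<Sum>i\<le>Suc N. (real ((m + d) choose i) - real (m choose i)) / ?w i)"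
    by (simp add: diff_divide_distrib sum.distrib[symmetric])
  also have "\<dots> \<le> 1 / real N + real d / real N"
    using Suc by (intro add_mono choose_Suc_increment_sum_le assms(1)) auto
  finally show ?case by (simp add: add_divide_distrib)
qed simp

lemma one_minus_power_Suc_ge:
  fixes x :: real
  assumes "0 \<le> x" "x \<le> 1"
  shows "(real i + 1) * (1 - x) * x ^ i \<le> 1 - x ^ Suc i"
proof -
  have "(real i + 1) * x ^ i = (\<Sum>k<Suc i. x ^ i)" by simp
  also have "\<dots> \<le> (\<Sum>k<Suc i. x ^ k)"
    using assms by (intro sum_mono power_decreasing) auto
  finally have "(1 - x) * ((real i + 1) * x ^ i) \<le> (1 - x) * (\<Sum>k<Suc i. x ^ k)"
    using assms by (intro mult_left_mono) auto
  also have "\<dots> = 1 - x ^ Suc i" by (rule one_diff_power_eq[symmetric])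
  finally show ?thesis by (simp add: mult_ac)
qed

lemma exp_le_chord:
  fixes t u :: real
  assumes "0 \<le> t" "t \<le> 1"
  shows "exp (t * u) \<le> 1 - t + t * exp u"
  using convex_onD[OF exp_convex, of t 0 u] assms by simp

section \<open>Missed tasks under geometric delays\<close>

locale geometric_rate =
  fixes n :: nat and q :: real
  assumes two_le_n: "2 \<le> n" and q_eq: "q = 1 / real n"
begin

definition r :: real where "r = 1 - q"

lemma q_pos: "0 < q" and q_lt_1: "q < 1" and n_mult_q: "real n * q = 1"
  using two_le_n by (auto simp: q_eq)

lemma r_pos: "0 < r" and r_lt_1: "r < 1" and q_plus_r: "q + r = 1"
  using q_pos q_lt_1 by (auto simp: r_def)

lemma geometric_weights_sums: "(\<lambda>j. q * r ^ j) sums 1"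
proof -
  have "(\<lambda>j. q * r ^ j) sums (q * (1 / (1 - r)))"
    using r_pos r_lt_1 by (intro sums_mult geometric_sums) auto
  then show ?thesis using q_pos by (simp add: r_def)
qed

(* miss s a m: probability that the first task to arrive finds no positive response although
   everybody is notified; a volunteers are active, m are inactive, the task arrives after a
   geometric number j of periods, and by then the inactive ones have waited j + s periods. *)
definition miss :: "nat \<Rightarrow> nat \<Rightarrow> nat \<Rightarrow> real" where
  "miss s a m = (\<Sum>j. q * r ^ j * r ^ a * (r + q * r ^ (j + s)) ^ m)"

lemma miss_term_bounds:
  "0 \<le> q * r ^ j * r ^ a * (r + q * r ^ (j + s)) ^ m"
  "q * r ^ j * r ^ a * (r + q * r ^ (j + s)) ^ m \<le> q * r ^ j"
proof -
  have "q * r ^ (j + s) \<le> q" using q_pos r_pos r_lt_1 by (simp add: power_le_one)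
  then have "r + q * r ^ (j + s) \<le> 1" using q_plus_r by simp
  moreover have "0 \<le> r + q * r ^ (j + s)" using q_pos r_pos by simp
  ultimately have "r ^ a * (r + q * r ^ (j + s)) ^ m \<le> 1"
    using r_pos r_lt_1 by (intro mult_le_one power_le_one) auto
  then show "q * r ^ j * r ^ a * (r + q * r ^ (j + s)) ^ m \<le> q * r ^ j"
    using q_pos r_pos by (simp add: mult.assoc mult_left_le)
  show "0 \<le> q * r ^ j * r ^ a * (r + q * r ^ (j + s)) ^ m"
    using q_pos r_pos by simp
qed

lemma miss_sums: "(\<lambda>j. q * r ^ j * r ^ a * (r + q * r ^ (j + s)) ^ m) sums miss s a m"
  unfolding miss_def
proof (rule summable_sums, rule summable_comparison_test')
  show "summable (\<lambda>j. q * r ^ j)" using geometric_weights_sums by (rule sums_summable)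
  show "norm (q * r ^ j * r ^ a * (r + q * r ^ (j + s)) ^ m) \<le> q * r ^ j" for j
    using miss_term_bounds[of j a s m] by (simp only: real_norm_def abs_of_nonneg)
qed

lemma miss_le_one: "miss s a m \<le> 1"
  by (rule sums_le[OF _ miss_sums geometric_weights_sums]) (rule miss_term_bounds(2))

lemma miss_zero_eq: "miss 0 a m = q * r ^ a + r * miss 1 a m"
proof -
  let ?f = "\<lambda>j. q * r ^ j * r ^ a * (r + q * r ^ (j + 0)) ^ m"
  have "(\<lambda>j. r * (q * r ^ j * r ^ a * (r + q * r ^ (j + 1)) ^ m)) sums (r * miss 1 a m)"
    by (intro sums_mult miss_sums)
  moreover have "(\<lambda>j. r * (q * r ^ j * r ^ a * (r + q * r ^ (j + 1)) ^ m)) = (\<lambda>j. ?f (Suc j))"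
    by (simp add: algebra_simps)
  ultimately have "(\<lambda>j. ?f (Suc j)) sums (r * miss 1 a m)" by simp
  then have "?f sums (r * miss 1 a m + ?f 0)" by (subst sums_Suc_iff[symmetric]) simp
  moreover have "?f 0 = q * r ^ a" by (simp add: add.commute q_plus_r)
  ultimately have "?f sums (r * miss 1 a m + q * r ^ a)" by (simp only:)
  with miss_sums[of a 0 m] show ?thesis using sums_unique2 by (simp add: add.commute)
qed

lemma miss_one_binomial:
  "miss 1 a m = r ^ (a + m) * (\<Sum>i\<le>m. real (m choose i) * (q ^ Suc i / (1 - r ^ Suc i)))"
proof -
  have expand: "q * r ^ j * r ^ a * (r + q * r ^ (j + 1)) ^ m
      = r ^ (a + m) * (\<Sum>i\<le>m. real (m choose i) * q ^ Suc i * (r ^ Suc i) ^ j)" for j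
  proof -
    have "r + q * r ^ (j + 1) = r * (q * r ^ j + 1)" by (simp add: algebra_simps)
    then have "q * r ^ j * r ^ a * (r + q * r ^ (j + 1)) ^ m
        = r ^ (a + m) * (q * r ^ j * (q * r ^ j + 1) ^ m)"
      by (simp add: power_mult_distrib power_add mult_ac)
    also have "(q * r ^ j + 1) ^ m = (\<Sum>i\<le>m. real (m choose i) * (q * r ^ j) ^ i)"
      by (simp add: binomial_ring)
    also have "q * r ^ j * \<dots> = (\<Sum>i\<le>m. real (m choose i) * q ^ Suc i * (r ^ Suc i) ^ j)"
      by (simp add: sum_distrib_left power_mult_distrib power_mult[symmetric] mult_ac)
    finally show ?thesis .
  qed
  have "(\<lambda>j. q * r ^ j * r ^ a * (r + q * r ^ (j + 1)) ^ m)
      sums (r ^ (a + m) * (\<Sum>i\<le>m. real (m choose i) * q ^ Suc i * (1 / (1 - r ^ Suc i))))"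
    unfolding expand
  proof (intro sums_mult sums_sum)
    fix i
    have "r ^ Suc i < 1" by (rule power_Suc_less_one[OF r_pos r_lt_1])
    then have "norm (r ^ Suc i) < 1" using r_pos by simp
    then show "(\<lambda>j. (r ^ Suc i) ^ j) sums (1 / (1 - r ^ Suc i))" by (rule geometric_sums)
  qed
  with miss_sums[of a 1 m] show ?thesis using sums_unique2 by simp
qed

lemma response_coeff_le: "q ^ Suc i / (1 - r ^ Suc i) \<le> 1 / ((real i + 1) * real (n - 1) ^ i)"
proof -
  have q_div_r: "q / r = 1 / real (n - 1)"
    using two_le_n unfolding r_def unfolding q_eq by (simp add: of_nat_diff field_simps)
  have pos: "0 < (real i + 1) * q * r ^ i" using q_pos r_pos by simp
  have "(real i + 1) * q * r ^ i \<le> 1 - r ^ Suc i"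
    using one_minus_power_Suc_ge[of r i] r_pos r_lt_1 by (simp add: r_def)
  then have "q ^ Suc i / (1 - r ^ Suc i) \<le> q ^ Suc i / ((real i + 1) * q * r ^ i)"
    using pos q_pos by (intro divide_left_mono) auto
  also have "\<dots> = (q / r) ^ i / (real i + 1)"
  proof -
    have "0 < r ^ i" "0 < real i + 1" using r_pos by auto
    then show ?thesis using q_pos r_pos by (simp add: divide_simps power_divide)
  qed
  also have "\<dots> = 1 / ((real i + 1) * real (n - 1) ^ i)"
    by (simp add: q_div_r power_divide)
  finally show ?thesis .
qed

lemma miss_one_diff_eq:
  assumes "b \<le> n"
  shows "miss 1 0 n - miss 1 b (n - b)
    = r ^ n * (\<Sum>i\<le>n. (real (n choose i) - real ((n - b) choose i)) * (q ^ Suc i / (1 - r ^ Suc i)))"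
proof -
  define w where "w i = q ^ Suc i / (1 - r ^ Suc i)" for i
  have "miss 1 b (n - b) = r ^ n * (\<Sum>i\<le>n. real ((n - b) choose i) * w i)"
    unfolding miss_one_binomial w_def using assms
    by (simp add: sum.mono_neutral_left[of "{..n}" "{..n - b}"] binomial_eq_0)
  moreover have "miss 1 0 n = r ^ n * (\<Sum>i\<le>n. real (n choose i) * w i)"
    unfolding miss_one_binomial w_def by simp
  ultimately have "miss 1 0 n - miss 1 b (n - b)
      = r ^ n * (\<Sum>i\<le>n. (real (n choose i) - real ((n - b) choose i)) * w i)"
    by (simp add: right_diff_distrib left_diff_distrib sum_subtractf)
  then show ?thesis by (simp only: w_def)
qed

lemma miss_one_drop_le:
  assumes "b \<le> n"
  shows "miss 1 0 n - miss 1 b (n - b) \<le> r ^ (n - b) - r ^ n"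
proof -
  obtain N where n: "n = Suc N" and N: "1 \<le> N" using two_le_n by (cases n) auto
  have "miss 1 0 n - miss 1 b (n - b) \<le> r ^ n * (\<Sum>i\<le>n. (real (n choose i) - real ((n - b) choose i))
      / ((real i + 1) * real (n - 1) ^ i))"
    unfolding miss_one_diff_eq[OF assms]
  proof (intro mult_left_mono sum_mono)
    fix i
    have "(n - b) choose i \<le> n choose i" by (rule binomial_right_mono) simp
    then show "(real (n choose i) - real ((n - b) choose i)) * (q ^ Suc i / (1 - r ^ Suc i))
        \<le> (real (n choose i) - real ((n - b) choose i)) / ((real i + 1) * real (n - 1) ^ i)"
      using mult_left_mono[OF response_coeff_le[of i]] by simp
  qed (use r_pos in simp)
  also have "\<dots> \<le> r ^ n * (real b / real N)"
    using choose_increment_sum_le[OF N, of "n - b" b] assms r_pos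
    by (intro mult_left_mono) (simp_all add: n)
  also have "\<dots> \<le> r ^ n * ((1 + 1 / real N) ^ b - 1)"
  proof -
    have "-1 \<le> 1 / real N" by (simp add: order_trans[of _ 0])
    then show ?thesis
      using Bernoulli_inequality[of "1 / real N" b] r_pos by (intro mult_left_mono) auto
  qed
  also have "\<dots> = r ^ (n - b) * (r * (1 + 1 / real N)) ^ b - r ^ n"
  proof -
    have "r ^ n = r ^ (n - b) * r ^ b" using assms by (simp add: power_add[symmetric])
    then show ?thesis by (simp add: power_mult_distrib right_diff_distrib)
  qed
  also have "r * (1 + 1 / real N) = 1"
  proof -
    have "0 < real N" using N by simp
    then show ?thesis using n unfolding r_def unfolding q_eq by (simp add: divide_simps)
  qed
  finally show ?thesis by simp
qed

(* potential a: probability that the first task from now on is served when everybody is notified,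
   a volunteers are active and the others have just become inactive; potential_next is the same
   one period later. *)
definition potential :: "nat \<Rightarrow> real" where "potential a = 1 - miss 0 a (n - a)"
definition potential_next :: "nat \<Rightarrow> real" where "potential_next a = 1 - miss 1 a (n - a)"
definition gain :: real where "gain = q * (1 - miss 1 0 n)"

lemma potential_nonneg: "0 \<le> potential a"
  using miss_le_one by (simp add: potential_def)

(* One period of the backward induction: with probability q a task arrives, the k notified active
   volunteers serve it with probability 1 - r ^ k and become inactive. *)
lemma bellman_inequality:
  assumes "k \<le> a" "a \<le> n"
  shows "q * (1 - r ^ k + potential_next (a - k)) + (1 - q) * potential_next a \<le> gain + potential a"
proof -
  have "miss 1 0 n - miss 1 (a - k) (n - (a - k)) \<le> r ^ (n - (a - k)) - r ^ n"
    using assms by (intro miss_one_drop_le) simp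
  also have "\<dots> = r ^ (n - (a - k)) * (1 - r ^ (a - k))"
    using assms by (simp add: right_diff_distrib power_add[symmetric])
  also have "\<dots> \<le> r ^ k * (1 - r ^ (a - k))"
    using assms r_pos r_lt_1 by (intro mult_right_mono power_decreasing) (auto simp: power_le_one)
  also have "\<dots> = r ^ k - r ^ a"
    using assms by (simp add: right_diff_distrib power_add[symmetric])
  finally have "q * (miss 1 0 n - miss 1 (a - k) (n - (a - k))) \<le> q * (r ^ k - r ^ a)"
    using q_pos by (intro mult_left_mono) auto
  moreover have "r * miss 1 a (n - a) = miss 1 a (n - a) - q * miss 1 a (n - a)"
    by (simp add: r_def algebra_simps)
  ultimately show ?thesis
    unfolding potential_def potential_next_def gain_def miss_zero_eq
    by (simp add: algebra_simps)
qed

definition L :: real where "L = ln (1 / r)"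

lemma exp_L: "exp L = 1 / r" and exp_minus_L: "exp (- L) = r"
  using r_pos by (simp_all add: L_def ln_div exp_minus inverse_eq_divide)

lemma q_le_L: "q \<le> L"
  using ln_le_minus_one[OF r_pos] r_pos by (simp add: L_def ln_div r_def)

lemma L_pos: "0 < L"
  using q_le_L q_pos by simp

lemma one_le_n_mult_L: "1 \<le> real n * L"
  using mult_left_mono[OF q_le_L, of "real n"] n_mult_q by simp

lemma exp_minus_mult_L_le:
  assumes "0 \<le> s" "s \<le> 1"
  shows "exp (- (s * L)) \<le> 1 - q * s"
  using exp_le_chord[OF assms, of "- L"] unfolding exp_minus_L r_def by (simp add: algebra_simps)

lemma r_mult_exp_L_le:
  assumes "0 \<le> x" "x \<le> 1"
  shows "r * (exp (L * x) - 1) \<le> L * x"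
proof -
  have "r * exp (L * x) \<le> r * (1 - x + x * (1 / r))"
    using exp_le_chord[OF assms, of L] r_pos unfolding exp_L by (simp add: mult.commute)
  also have "\<dots> = r - r * x + x" using r_pos by (simp add: field_simps)
  finally have "r * exp (L * x) \<le> r - r * x + x" .
  moreover have "q * x = x - r * x" by (simp add: r_def algebra_simps)
  ultimately have "r * (exp (L * x) - 1) \<le> q * x" by (simp add: algebra_simps)
  also have "\<dots> \<le> L * x" using q_le_L assms by (intro mult_right_mono) auto
  finally show ?thesis .
qed

(* Continuous analogue of the series defining miss 1 0 n: each term of the series dominates
   the increment of exp_profile over [r * x, x] with x = r ^ j, so the series telescopes. *)
definition exp_profile :: "real \<Rightarrow> real" where
  "exp_profile x = exp (- (real n * L) * (1 - x))"

lemma exp_profile_le_power: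
  assumes "0 \<le> x" "x \<le> 1"
  shows "exp_profile (r * x) \<le> (r + q * (r * x)) ^ n"
proof -
  have "0 \<le> 1 - r * x" "1 - r * x \<le> 1"
    using assms r_pos r_lt_1 by (auto simp: mult_le_one)
  then have "exp (- ((1 - r * x) * L)) \<le> 1 - q * (1 - r * x)"
    by (rule exp_minus_mult_L_le)
  also have "\<dots> = r + q * (r * x)" by (simp add: r_def algebra_simps)
  finally have "exp (- ((1 - r * x) * L)) \<le> r + q * (r * x)" .
  then have "exp (- ((1 - r * x) * L)) ^ n \<le> (r + q * (r * x)) ^ n"
    by (intro power_mono) auto
  then show ?thesis
    unfolding exp_profile_def exp_of_nat_mult[symmetric] by (simp add: algebra_simps)
qed

lemma exp_profile_eq: "exp_profile x = exp_profile (r * x) * exp (L * x)"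
proof -
  have "- (real n * L) * (1 - x) = - (real n * L) * (1 - r * x) + (real n * q) * L * x"
    by (simp add: r_def algebra_simps)
  then show ?thesis
    unfolding exp_profile_def n_mult_q by (simp add: mult_exp_exp)
qed

lemma miss_one_term_ge:
  "r / (real n * L) * (exp_profile (r ^ j) - exp_profile (r ^ Suc j))
    \<le> q * r ^ j * r ^ 0 * (r + q * r ^ (j + 1)) ^ n"
proof -
  define x where "x = r ^ j"
  have x: "0 < x" "x \<le> 1" using r_pos r_lt_1 by (auto simp: x_def power_le_one)
  have nL: "0 < real n * L" using one_le_n_mult_L by simp
  have "exp_profile x - exp_profile (r * x) = exp_profile (r * x) * (exp (L * x) - 1)"
    using exp_profile_eq[of x] by (simp add: algebra_simps)
  then have "r / (real n * L) * (exp_profile x - exp_profile (r * x))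
      = exp_profile (r * x) * (r * (exp (L * x) - 1)) / (real n * L)"
    by (simp add: mult_ac)
  also have "\<dots> \<le> exp_profile (r * x) * (L * x) / (real n * L)"
    using r_mult_exp_L_le[of x] x nL
    by (intro divide_right_mono mult_left_mono) (auto simp: exp_profile_def)
  also have "\<dots> = q * x * exp_profile (r * x)"
    using L_pos two_le_n by (simp add: q_eq field_simps)
  also have "\<dots> \<le> q * x * (r + q * (r * x)) ^ n"
    using exp_profile_le_power[of x] x q_pos by (intro mult_left_mono) auto
  finally show ?thesis by (simp add: x_def algebra_simps)
qed

lemma miss_one_ge: "r * (1 - exp (- (real n * L))) / (real n * L) \<le> miss 1 0 n"
proof -
  define c where "c = r / (real n * L)"
  have partial: "c * (1 - exp_profile (r ^ J)) \<le> miss 1 0 n" for J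
  proof -
    have "(\<Sum>j<J. c * (exp_profile (r ^ j) - exp_profile (r ^ Suc j)))
        = c * (exp_profile (r ^ 0) - exp_profile (r ^ J))"
      by (simp only: sum_distrib_left[symmetric]
          sum_lessThan_telescope'[of "\<lambda>j. exp_profile (r ^ j)"])
    then have "c * (1 - exp_profile (r ^ J))
        = (\<Sum>j<J. c * (exp_profile (r ^ j) - exp_profile (r ^ Suc j)))"
      by (simp add: exp_profile_def)
    also have "\<dots> \<le> (\<Sum>j<J. q * r ^ j * r ^ 0 * (r + q * r ^ (j + 1)) ^ n)"
      unfolding c_def by (intro sum_mono miss_one_term_ge)
    also have "\<dots> \<le> miss 1 0 n"
      unfolding miss_def using miss_sums[of 0 1 n] miss_term_bounds(1)[of _ 0 1 n]
      by (intro sum_le_suminf) (auto simp: sums_iff)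
    finally show ?thesis .
  qed
  have "(\<lambda>J. c * (1 - exp_profile (r ^ J))) \<longlonglongrightarrow> c * (1 - exp (- (real n * L) * (1 - 0)))"
    unfolding exp_profile_def using r_pos r_lt_1 by (intro tendsto_intros LIMSEQ_power_zero) auto
  then have "c * (1 - exp (- (real n * L) * (1 - 0))) \<le> miss 1 0 n"
    using partial by (intro LIMSEQ_le_const2) auto
  then show ?thesis by (simp add: c_def)
qed

lemma completions_bound_le_ratio:
  "1 - r ^ n + (real n + 1) * (1 - miss 1 0 n)
    \<le> (1 + q - (q * (1 - q)) / (ln (1 / (1 - q)) * (1 + q)) * (1 - exp (-1))) * (real n + 1)"
proof -
  define W where "W = r * (1 - exp (-1)) / L"
  have q_n: "q * (real n + 1) = 1 + q" using n_mult_q by (simp add: algebra_simps)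
  have "(q * (1 - q)) / (ln (1 / (1 - q)) * (1 + q)) * (1 - exp (-1)) * (real n + 1)
      = (q * (real n + 1)) * (r * (1 - exp (-1))) / ((1 + q) * L)"
    by (simp add: L_def r_def field_simps)
  also have "\<dots> = W" using q_pos by (simp add: q_n W_def)
  finally have ratio: "(1 + q - (q * (1 - q)) / (ln (1 / (1 - q)) * (1 + q)) * (1 - exp (-1)))
      * (real n + 1) = real n + 2 + q - W"
    using q_n by (simp add: algebra_simps)
  have "W / real n = r * (1 - exp (-1)) / (real n * L)" by (simp add: W_def)
  also have "\<dots> \<le> r * (1 - exp (- (real n * L))) / (real n * L)"
    using one_le_n_mult_L r_pos by (intro divide_right_mono mult_left_mono) auto
  also have "\<dots> \<le> miss 1 0 n" by (rule miss_one_ge)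
  finally have "W / real n \<le> miss 1 0 n" .
  then have "(real n + 1) * (W / real n) \<le> (real n + 1) * miss 1 0 n"
    by (intro mult_left_mono) auto
  moreover have "(real n + 1) * (W / real n) = W + W / real n"
    using two_le_n by (simp add: field_simps)
  moreover have "0 \<le> W / real n" using r_pos L_pos by (simp add: W_def)
  ultimately have "W \<le> (real n + 1) * miss 1 0 n" by linarith
  moreover have "0 \<le> r ^ n" using r_pos by simp
  ultimately show ?thesis
    unfolding ratio using q_pos by (simp add: algebra_simps)
qed

end

section \<open>Expectations over probability mass functions\<close>

lemma integrable_measure_pmf_bounded:
  fixes f :: "'a \<Rightarrow> real"
  assumes "\<And>x. x \<in> set_pmf M \<Longrightarrow> \<bar>f x\<bar> \<le> B"
  shows "integrable (measure_pmf M) f"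
  by (rule measure_pmf.integrable_const_bound[where B = B]) (use assms in \<open>auto intro!: AE_pmfI\<close>)

lemma abs_expectation_pmf_le:
  fixes f :: "'a \<Rightarrow> real"
  assumes "\<And>x. x \<in> set_pmf M \<Longrightarrow> \<bar>f x\<bar> \<le> B"
  shows "\<bar>measure_pmf.expectation M f\<bar> \<le> B"
proof -
  have "integrable (measure_pmf M) f" using assms by (rule integrable_measure_pmf_bounded)
  moreover have "f x \<le> B" "- B \<le> f x" if "x \<in> set_pmf M" for x
    using assms[OF that] by auto
  then have "AE x in M. f x \<le> B" "AE x in M. - B \<le> f x"
    by (auto intro!: AE_pmfI)
  ultimately have "measure_pmf.expectation M f \<le> B" "- B \<le> measure_pmf.expectation M f"
    by (auto intro: measure_pmf.integral_le_const measure_pmf.integral_ge_const)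
  then show ?thesis by linarith
qed

lemma expectation_const_add_pmf:
  fixes f :: "'a \<Rightarrow> real"
  assumes "\<And>x. x \<in> set_pmf M \<Longrightarrow> \<bar>f x\<bar> \<le> B"
  shows "measure_pmf.expectation M (\<lambda>x. c + f x) = c + measure_pmf.expectation M f"
  using assms by (subst Bochner_Integration.integral_add) (auto intro: integrable_measure_pmf_bounded)

lemma expectation_bind_pmf_bounded:
  fixes f :: "'b \<Rightarrow> real"
  assumes bounded: "\<And>y. y \<in> set_pmf (bind_pmf M N) \<Longrightarrow> \<bar>f y\<bar> \<le> B"
  shows "measure_pmf.expectation (bind_pmf M N) f
    = measure_pmf.expectation M (\<lambda>x. measure_pmf.expectation (N x) f)"
proof -
  \<comment> \<open>integral_bind needs an integrand bounded everywhere; truncation is invisible on the support\<close>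
  define f' where "f' y = max (- B) (min B (f y))" for y
  have f'_eq: "f' y = f y" if "x \<in> set_pmf M" "y \<in> set_pmf (N x)" for x y
  proof -
    have "\<bar>f y\<bar> \<le> B" using bounded that by auto
    then show ?thesis by (auto simp: f'_def)
  qed
  have "measure_pmf.expectation (bind_pmf M N) f = measure_pmf.expectation (bind_pmf M N) f'"
    by (intro integral_cong_AE) (auto intro!: AE_pmfI simp: f'_eq)
  also have "\<dots> = measure_pmf.expectation M (\<lambda>x. measure_pmf.expectation (N x) f')"
    unfolding measure_pmf_bind
  proof (rule integral_bind[where K = "count_space UNIV" and B = "\<bar>B\<bar>" and B' = 1])
    show "(\<lambda>x. measure_pmf (N x)) \<in> measurable (measure_pmf M) (subprob_algebra (count_space UNIV))"
      by (auto simp: measure_pmf_in_subprob_algebra)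
    show "AE x in measure_pmf M. emeasure (measure_pmf (N x)) (space (measure_pmf (N x))) \<le> ennreal 1"
      by (auto simp: measure_pmf.emeasure_space_1)
  qed (auto simp: f'_def measure_pmf.finite_measure_axioms)
  also have "\<dots> = measure_pmf.expectation M (\<lambda>x. measure_pmf.expectation (N x) f)"
    by (intro integral_cong_AE AE_pmfI integral_cong_AE) (auto intro!: AE_pmfI simp: f'_eq)
  finally show ?thesis .
qed

lemma expectation_pmf_swap:
  fixes f :: "'a \<Rightarrow> 'b \<Rightarrow> real"
  assumes bounded: "\<And>x y. x \<in> set_pmf M \<Longrightarrow> y \<in> set_pmf N \<Longrightarrow> \<bar>f x y\<bar> \<le> B"
  shows "measure_pmf.expectation M (\<lambda>x. measure_pmf.expectation N (f x))
       = measure_pmf.expectation N (\<lambda>y. measure_pmf.expectation M (\<lambda>x. f x y))"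
proof -
  have iterated: "measure_pmf.expectation (bind_pmf P (\<lambda>x. bind_pmf Q (\<lambda>y. return_pmf (u x y)))) F
      = measure_pmf.expectation P (\<lambda>x. measure_pmf.expectation Q (\<lambda>y. F (u x y)))"
    if "\<And>x y. x \<in> set_pmf P \<Longrightarrow> y \<in> set_pmf Q \<Longrightarrow> \<bar>F (u x y)\<bar> \<le> B"
    for P :: "'c pmf" and Q :: "'d pmf" and u :: "'c \<Rightarrow> 'd \<Rightarrow> 'a \<times> 'b" and F
  proof -
    have "measure_pmf.expectation (bind_pmf P (\<lambda>x. bind_pmf Q (\<lambda>y. return_pmf (u x y)))) F
        = measure_pmf.expectation P (\<lambda>x. measure_pmf.expectation (bind_pmf Q (\<lambda>y. return_pmf (u x y))) F)"
      using that by (intro expectation_bind_pmf_bounded) auto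
    also have "\<dots> = measure_pmf.expectation P (\<lambda>x. measure_pmf.expectation Q
        (\<lambda>y. measure_pmf.expectation (return_pmf (u x y)) F))"
      using that by (intro integral_cong_AE AE_pmfI expectation_bind_pmf_bounded) auto
    finally show ?thesis by simp
  qed
  have "measure_pmf.expectation M (\<lambda>x. measure_pmf.expectation N (f x))
      = measure_pmf.expectation (bind_pmf M (\<lambda>x. bind_pmf N (\<lambda>y. return_pmf (x, y)))) (case_prod f)"
    using bounded by (subst iterated) auto
  also have "\<dots> = measure_pmf.expectation (bind_pmf N (\<lambda>y. bind_pmf M (\<lambda>x. return_pmf (x, y)))) (case_prod f)"
    by (simp only: bind_commute_pmf[of M])
  also have "\<dots> = measure_pmf.expectation N (\<lambda>y. measure_pmf.expectation M (\<lambda>x. f x y))"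
    using bounded by (subst iterated) auto
  finally show ?thesis .
qed

lemma expectation_Pi_bernoulli_some:
  assumes "finite K" "0 \<le> p" "p \<le> 1"
  shows "measure_pmf.expectation (Pi_pmf K False (\<lambda>_. bernoulli_pmf p))
      (\<lambda>b. if {v \<in> K. b v} = {} then 0 else 1) = 1 - (1 - p) ^ card K"
proof -
  have "(if {v \<in> K. b v} = {} then 0 else 1) = 1 - (\<Prod>v\<in>K. if b v then 0 else (1::real))" for b
    using assms(1) by (auto simp: prod_zero_iff)
  moreover have "measure_pmf.expectation (Pi_pmf K False (\<lambda>_. bernoulli_pmf p))
      (\<lambda>b. \<Prod>v\<in>K. if b v then 0 else (1::real)) = (1 - p) ^ card K"
    using assms by (subst expectation_prod_Pi_pmf) (auto intro!: integrable_measure_pmf_finite)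
  moreover have "finite (set_pmf (Pi_pmf K False (\<lambda>_. bernoulli_pmf p)))"
    using assms(1) by (simp add: set_Pi_pmf finite_PiE_dflt)
  ultimately show ?thesis
    by (simp add: Bochner_Integration.integral_diff integrable_measure_pmf_finite)
qed

lemma prod_if_const:
  assumes "finite A"
  shows "(\<Prod>v\<in>A. if P v then x else y) = x ^ card {v \<in> A. P v} * y ^ (card A - card {v \<in> A. P v})"
proof -
  have "A \<inter> - {v. P v} = A - {v \<in> A. P v}" by auto
  then have "card (A \<inter> - {v. P v}) = card A - card {v \<in> A. P v}"
    using assms by (simp add: card_Diff_subset)
  moreover have "A \<inter> {v. P v} = {v \<in> A. P v}" by auto
  ultimately show ?thesis using assms by (simp add: prod.If_cases)
qed

lemma pmf_map_pmf_add:
  fixes M :: "nat pmf"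
  shows "pmf (map_pmf ((+) t) M) x = (if t \<le> x then pmf M (x - t) else 0)"
proof (cases "t \<le> x")
  case True
  then have "pmf (map_pmf ((+) t) M) (t + (x - t)) = pmf M (x - t)"
    by (intro pmf_map_inj') (simp add: inj_on_def)
  with True show ?thesis by simp
next
  case False
  then have "x \<notin> set_pmf (map_pmf ((+) t) M)" by auto
  with False show ?thesis by (simp add: set_pmf_eq)
qed

lemma expectation_bind_bind_map_add:
  fixes c :: "'a \<Rightarrow> real" and R :: "'a \<Rightarrow> 'b \<Rightarrow> real pmf"
  assumes R: "\<And>a b x. x \<in> set_pmf (R a b) \<Longrightarrow> \<bar>x\<bar> \<le> B" and c: "\<And>a. \<bar>c a\<bar> \<le> C"
  shows "measure_pmf.expectation (bind_pmf P (\<lambda>a. bind_pmf Q (\<lambda>b. map_pmf (\<lambda>x. c a + x) (R a b)))) (\<lambda>x. x)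
    = measure_pmf.expectation P (\<lambda>a. c a + measure_pmf.expectation Q
        (\<lambda>b. measure_pmf.expectation (R a b) (\<lambda>x. x)))"
proof -
  have bounded: "\<bar>c a + x\<bar> \<le> C + B" if "x \<in> set_pmf (R a b)" for a b x
    using R[OF that] c[of a] by linarith
  have inner: "measure_pmf.expectation (map_pmf (\<lambda>x. c a + x) (R a b)) (\<lambda>x. x)
      = c a + measure_pmf.expectation (R a b) (\<lambda>x. x)" for a b
    unfolding integral_map_pmf by (rule expectation_const_add_pmf) (rule R)
  have "measure_pmf.expectation (bind_pmf P (\<lambda>a. bind_pmf Q (\<lambda>b. map_pmf (\<lambda>x. c a + x) (R a b)))) (\<lambda>x. x)
      = measure_pmf.expectation P (\<lambda>a. measure_pmf.expectation Q
          (\<lambda>b. measure_pmf.expectation (map_pmf (\<lambda>x. c a + x) (R a b)) (\<lambda>x. x)))"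
    using bounded
    by (subst expectation_bind_pmf_bounded[where B = "C + B"], force)
       (intro integral_cong_AE AE_pmfI expectation_bind_pmf_bounded[where B = "C + B"], auto)
  also have "\<dots> = measure_pmf.expectation P (\<lambda>a. c a + measure_pmf.expectation Q
      (\<lambda>b. measure_pmf.expectation (R a b) (\<lambda>x. x)))"
    unfolding inner using R
    by (intro Bochner_Integration.integral_cong refl expectation_const_add_pmf abs_expectation_pmf_le)
  finally show ?thesis .
qed

lemma sums_expectation_finite_pmf:
  fixes f :: "nat \<Rightarrow> 'a \<Rightarrow> real"
  assumes "finite (set_pmf M)" "\<And>x. (\<lambda>j. f j x) sums F x"
  shows "(\<lambda>j. measure_pmf.expectation M (f j)) sums measure_pmf.expectation M F"
proof -
  have "measure_pmf.expectation M u = (\<Sum>x\<in>set_pmf M. pmf M x * u x)" for u :: "'a \<Rightarrow> real"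
    using assms(1) by (subst integral_measure_pmf[of "set_pmf M"]) auto
  moreover have "(\<lambda>j. \<Sum>x\<in>set_pmf M. pmf M x * f j x) sums (\<Sum>x\<in>set_pmf M. pmf M x * F x)"
    using assms(2) by (intro sums_sum sums_mult)
  ultimately show ?thesis by simp
qed

lemma Pi_pmf_partial_shift:
  fixes M :: "nat pmf"
  assumes "finite D" "K \<subseteq> D" "\<And>v. v \<notin> D \<Longrightarrow> ret v = 0"
  shows "Pi_pmf D 0 (\<lambda>v. if v \<in> K then map_pmf ((+) t) M else return_pmf (ret v))
    = map_pmf (\<lambda>z v. if v \<in> K then t + z v else ret v) (Pi_pmf K 0 (\<lambda>_. M))"
proof -
  let ?G = "\<lambda>v. if v \<in> K then M else return_pmf 0"
  let ?shift = "\<lambda>v w. if v \<in> K then t + w else ret v"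
  have "Pi_pmf D 0 (\<lambda>v. if v \<in> K then map_pmf ((+) t) M else return_pmf (ret v))
      = Pi_pmf D 0 (\<lambda>v. bind_pmf (?G v) (\<lambda>w. return_pmf (?shift v w)))"
    by (intro Pi_pmf_cong) (auto simp: map_pmf_def)
  also have "\<dots> = bind_pmf (Pi_pmf D 0 ?G) (\<lambda>z. Pi_pmf D 0 (\<lambda>v. return_pmf (?shift v (z v))))"
    by (rule Pi_pmf_bind) (rule assms(1))
  also have "\<dots> = map_pmf (\<lambda>z v. if v \<in> D then ?shift v (z v) else 0) (Pi_pmf D 0 ?G)"
    using assms(1) by (simp add: map_pmf_def)
  also have "Pi_pmf D 0 ?G = Pi_pmf {v \<in> D. v \<in> K} 0 (\<lambda>_. M)"
    by (rule Pi_pmf_if_set[OF assms(1)])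
  also have "{v \<in> D. v \<in> K} = K" using assms(2) by auto
  also have "(\<lambda>z v. if v \<in> D then ?shift v (z v) else 0) = (\<lambda>z v. if v \<in> K then t + z v else ret v)"
    using assms(2,3) by (auto simp: fun_eq_iff)
  finally show ?thesis .
qed

section \<open>The volunteer model\<close>

lemma run_range:
  "x \<in> set_pmf (run V S lam p g pol k t ret h) \<Longrightarrow> 0 \<le> x \<and> x \<le> real k"
proof (induction k arbitrary: t ret h x)
  case (Suc k)
  then show ?case
    by (auto simp: Let_def split: option.splits if_splits dest!: Suc.IH)
qed simp

lemma arrival_pmf_single_type:
  assumes "0 \<le> lam 1 t" "lam 1 t \<le> 1"
  shows "arrival_pmf 1 lam t = map_pmf (\<lambda>b. if b then Some 1 else None) (bernoulli_pmf (lam 1 t))"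
proof (rule pmf_eqI)
  fix a :: "nat option"
  let ?f = "\<lambda>a. case a of None \<Rightarrow> 1 - (\<Sum>s\<in>{1..1::nat}. lam s t)
       | Some s \<Rightarrow> (if s \<in> {1..1} then lam s t else 0)"
  have "(\<integral>\<^sup>+a. ennreal (?f a) \<partial>count_space UNIV) = (\<Sum>a\<in>{None, Some 1}. ennreal (?f a))"
    by (intro nn_integral_count_space') (auto split: option.splits)
  also have "\<dots> = 1" using assms by (simp flip: ennreal_plus)
  finally have "pmf (arrival_pmf 1 lam t) a = ?f a"
    unfolding arrival_pmf_def using assms by (intro pmf_embed_pmf) (auto split: option.splits)
  moreover have "{x. x} = {True}" "Collect Not = {False}" by auto
  ultimately show "pmf (arrival_pmf 1 lam t) a
      = pmf (map_pmf (\<lambda>b. if b then Some 1 else None) (bernoulli_pmf (lam 1 t))) a"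
    using assms by (cases a) (auto simp: pmf_map vimage_def measure_pmf_single)
qed

locale volunteer_instance = geometric_rate +
  fixes g :: "nat pmf" and pol :: policy
  assumes pmf_g: "\<And>\<tau>. 1 \<le> \<tau> \<Longrightarrow> pmf g \<tau> = q * (1 - q) ^ (\<tau> - 1)"
begin

lemma sum_pmf_g: "(\<Sum>\<tau>\<in>{1..m}. pmf g \<tau>) = 1 - r ^ m"
proof (induction m)
  case (Suc m)
  have "(\<Sum>\<tau>\<in>{1..Suc m}. pmf g \<tau>) = (\<Sum>\<tau>\<in>{1..m}. pmf g \<tau>) + pmf g (Suc m)"
    by simp
  also have "\<dots> = 1 - r ^ Suc m"
    unfolding Suc.IH using pmf_g[of "Suc m"] by (simp add: r_def algebra_simps)
  finally show ?case .
qed simp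

lemma cdfG_g: "cdfG g m = 1 - r ^ m"
  unfolding cdfG_def by (rule sum_pmf_g)

lemma pmf_g_0: "pmf g 0 = 0"
proof -
  have "pmf g 0 \<le> r ^ m" for m
  proof -
    have "pmf g 0 + (\<Sum>\<tau>\<in>{Suc 0..m}. pmf g \<tau>) = (\<Sum>\<tau>\<in>{0..m}. pmf g \<tau>)"
      by (rule sum.atLeast_Suc_atMost[symmetric]) simp
    also have "\<dots> = measure_pmf.prob g {0..m}" by (simp add: measure_measure_pmf_finite)
    also have "\<dots> \<le> 1" by simp
    finally show ?thesis using sum_pmf_g[of m] by simp
  qed
  moreover have "(\<lambda>m. r ^ m) \<longlonglongrightarrow> 0" using r_pos r_lt_1 by (intro LIMSEQ_power_zero) auto
  ultimately have "pmf g 0 \<le> 0" by (intro LIMSEQ_le_const) auto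
  then show ?thesis using pmf_nonneg[of g 0] by simp
qed

lemma set_pmf_g: "z \<in> set_pmf g \<Longrightarrow> 1 \<le> z"
  using pmf_g_0 by (cases z) (auto simp: set_pmf_eq)

abbreviation lam :: "nat \<Rightarrow> nat \<Rightarrow> real" where "lam \<equiv> \<lambda>s t. if t = 1 then 1 else q"

lemma lam_bounds: "0 \<le> lam s t" "lam s t \<le> 1"
  using q_pos q_lt_1 by auto

definition completions :: "nat \<Rightarrow> nat \<Rightarrow> (nat \<Rightarrow> nat) \<Rightarrow> history \<Rightarrow> real" where
  "completions k t ret h = measure_pmf.expectation (run n 1 lam (\<lambda>v s. q) g pol k t ret h) (\<lambda>x. x)"

lemma completions_bounds: "0 \<le> completions k t ret h" "completions k t ret h \<le> real k"
  unfolding completions_def using run_range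
  by (fastforce intro!: integral_nonneg_AE AE_pmfI)
    (intro measure_pmf.integral_le_const AE_pmfI integrable_measure_pmf_bounded[where B = "real k"];
      use run_range in force)

lemma abs_completions_le: "\<bar>completions k t ret h\<bar> \<le> real k"
  using completions_bounds by simp

(* N is the notified set recorded in the history, A the notified volunteers who are active. *)
definition notify_value :: "nat \<Rightarrow> nat \<Rightarrow> nat set \<Rightarrow> nat set \<Rightarrow> (nat \<Rightarrow> nat) \<Rightarrow> history \<Rightarrow> real" where
  "notify_value k t N A ret h = measure_pmf.expectation (Pi_pmf A False (\<lambda>v. bernoulli_pmf q))
     (\<lambda>b. (if {v \<in> A. b v} = {} then 0 else 1) + measure_pmf.expectation (Pi_pmf A 0 (\<lambda>v. g))
       (\<lambda>z. completions k (Suc t) (\<lambda>v. if v \<in> A then t + z v else ret v) (h @ [Some (1, N, {v \<in> A. b v})])))"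

lemma completions_Suc:
  "completions (Suc k) t ret h
    = lam 1 t * notify_value k t (pol h 1 \<inter> {1..n}) {v \<in> pol h 1 \<inter> {1..n}. ret v \<le> t} ret h
      + (1 - lam 1 t) * completions k (Suc t) ret (h @ [None])"
proof -
  have bounded: "\<bar>x\<bar> \<le> real (Suc k)" if "x \<in> set_pmf (run n 1 lam (\<lambda>v s. q) g pol (Suc k) t ret h)" for x
    using run_range[OF that] by simp
  show ?thesis
    unfolding completions_def notify_value_def
    apply (subst run.simps)
    apply (subst expectation_bind_pmf_bounded[where B = "real (Suc k)"])
    using bounded apply (simp only: run.simps)
    apply (unfold arrival_pmf_single_type[where lam = lam, OF lam_bounds] integral_map_pmf)
    apply (subst integral_bernoulli_pmf[OF lam_bounds])
    apply (simp only: option.case if_True if_False Let_def)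
    apply (subst expectation_bind_bind_map_add[where B = "real k" and C = 1])
    using run_range by (auto simp: mult.commute)
qed

definition card_active :: "(nat \<Rightarrow> bool) \<Rightarrow> nat" where
  "card_active \<beta> = card {v \<in> {1..n}. \<beta> v}"

lemma card_active_le: "card_active \<beta> \<le> n"
proof -
  have "card {v \<in> {1..n}. \<beta> v} \<le> card {1..n}" by (rule card_mono) auto
  then show ?thesis by (simp add: card_active_def)
qed

(* The platform's belief at time t: volunteers with \<beta> v are active, with known return times
   c v \<le> t; each other volunteer was notified while active and has been inactive since t,
   so by memorylessness its return time is t + Z. *)
definition belief :: "nat \<Rightarrow> (nat \<Rightarrow> bool) \<Rightarrow> (nat \<Rightarrow> nat) \<Rightarrow> (nat \<Rightarrow> nat) pmf" where
  "belief t \<beta> c = Pi_pmf {1..n} 0 (\<lambda>v. if \<beta> v then return_pmf (c v) else map_pmf ((+) t) g)"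

definition reactivate :: "(nat \<Rightarrow> bool) \<Rightarrow> (nat \<Rightarrow> bool) pmf" where
  "reactivate \<beta> = Pi_pmf {1..n} False (\<lambda>v. if \<beta> v then return_pmf True else bernoulli_pmf q)"

lemma finite_set_reactivate: "finite (set_pmf (reactivate \<beta>))"
  unfolding reactivate_def by (simp add: set_Pi_pmf finite_PiE_dflt)

lemma belief_support:
  assumes "ret \<in> set_pmf (belief t \<beta> c)"
  shows "v \<notin> {1..n} \<Longrightarrow> ret v = 0"
    and "v \<in> {1..n} \<Longrightarrow> \<beta> v \<Longrightarrow> ret v = c v"
    and "v \<in> {1..n} \<Longrightarrow> \<not> \<beta> v \<Longrightarrow> t < ret v"
  using assms set_pmf_g unfolding belief_def set_Pi_pmf[OF finite_atLeastAtMost] PiE_dflt_def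
  by (fastforce split: if_splits)+

lemma belief_active_iff:
  assumes "ret \<in> set_pmf (belief t \<beta> c)" "\<And>v. \<beta> v \<Longrightarrow> c v \<le> t" "v \<in> {1..n}"
  shows "ret v \<le> t \<longleftrightarrow> \<beta> v"
  using belief_support(2,3)[OF assms(1) assms(3)] assms(2)[of v] by (cases "\<beta> v") auto

lemma delay_memoryless:
  "map_pmf ((+) t) g
    = bind_pmf (bernoulli_pmf q) (\<lambda>b. if b then return_pmf (Suc t) else map_pmf ((+) (Suc t)) g)"
proof (rule pmf_eqI)
  fix x
  have "pmf (bind_pmf (bernoulli_pmf q) (\<lambda>b. if b then return_pmf (Suc t) else map_pmf ((+) (Suc t)) g)) x
      = q * indicator {x} (Suc t) + (1 - q) * pmf (map_pmf ((+) (Suc t)) g) x"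
    unfolding pmf_bind using q_pos q_lt_1 by (simp add: mult.commute)
  also have "\<dots> = pmf (map_pmf ((+) t) g) x"
  proof (cases "x \<le> t")
    case True
    then show ?thesis by (auto simp: pmf_map_pmf_add pmf_g_0 indicator_def)
  next
    case False
    then obtain m where m: "x = Suc t + m" by (metis add_Suc less_imp_Suc_add not_le)
    show ?thesis
      using pmf_g[of m] pmf_g[of "Suc m"] pmf_g_0 by (cases m) (simp_all add: m pmf_map_pmf_add)
  qed
  finally show "pmf (map_pmf ((+) t) g) x = pmf (bind_pmf (bernoulli_pmf q)
      (\<lambda>b. if b then return_pmf (Suc t) else map_pmf ((+) (Suc t)) g)) x" ..
qed

lemma belief_Suc:
  "belief t \<beta> c = bind_pmf (reactivate \<beta>) (\<lambda>\<beta>'. belief (Suc t) \<beta>' (\<lambda>v. if \<beta> v then c v else Suc t))"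
proof -
  let ?P = "\<lambda>v. if \<beta> v then return_pmf True else bernoulli_pmf q"
  let ?Q = "\<lambda>v b. if b then return_pmf (if \<beta> v then c v else Suc t) else map_pmf ((+) (Suc t)) g"
  have "belief t \<beta> c = Pi_pmf {1..n} 0 (\<lambda>v. bind_pmf (?P v) (?Q v))"
    unfolding belief_def by (intro Pi_pmf_cong) (auto simp: delay_memoryless bind_return_pmf)
  also have "\<dots> = bind_pmf (reactivate \<beta>) (\<lambda>\<beta>'. Pi_pmf {1..n} 0 (\<lambda>v. ?Q v (\<beta>' v)))"
    unfolding reactivate_def by (rule Pi_pmf_bind) simp
  finally show ?thesis by (simp add: belief_def)
qed

lemma belief_notify:
  assumes "K \<subseteq> {1..n}" "\<And>v. v \<in> K \<Longrightarrow> \<beta> v"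
  shows "bind_pmf (belief t \<beta> c) (\<lambda>ret. map_pmf (\<lambda>z v. if v \<in> K then t + z v else ret v) (Pi_pmf K 0 (\<lambda>_. g)))
    = belief t (\<lambda>v. \<beta> v \<and> v \<notin> K) c"
proof -
  let ?P = "\<lambda>v. if \<beta> v then return_pmf (c v) else map_pmf ((+) t) g"
  let ?Q = "\<lambda>v x. if v \<in> K then map_pmf ((+) t) g else return_pmf x"
  have "belief t (\<lambda>v. \<beta> v \<and> v \<notin> K) c = Pi_pmf {1..n} 0 (\<lambda>v. bind_pmf (?P v) (?Q v))"
    unfolding belief_def
  proof (intro Pi_pmf_cong refl)
    fix v
    show "(if \<beta> v \<and> v \<notin> K then return_pmf (c v) else map_pmf ((+) t) g) = bind_pmf (?P v) (?Q v)"
      using assms(2)[of v] by (cases "v \<in> K") (auto simp: bind_return_pmf bind_return_pmf')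
  qed
  also have "\<dots> = bind_pmf (belief t \<beta> c) (\<lambda>ret. Pi_pmf {1..n} 0 (\<lambda>v. ?Q v (ret v)))"
    unfolding belief_def by (rule Pi_pmf_bind) simp
  also have "\<dots> = bind_pmf (belief t \<beta> c)
      (\<lambda>ret. map_pmf (\<lambda>z v. if v \<in> K then t + z v else ret v) (Pi_pmf K 0 (\<lambda>_. g)))"
    using assms(1) belief_support(1) by (intro bind_pmf_cong refl Pi_pmf_partial_shift) auto
  finally show ?thesis ..
qed

lemma expectation_belief_notify:
  fixes F :: "(nat \<Rightarrow> nat) \<Rightarrow> real"
  assumes "K \<subseteq> {1..n}" "\<And>v. v \<in> K \<Longrightarrow> \<beta> v" "\<And>x. \<bar>F x\<bar> \<le> B"
  shows "measure_pmf.expectation (belief t \<beta> c) (\<lambda>ret. measure_pmf.expectation (Pi_pmf K 0 (\<lambda>_. g))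
      (\<lambda>z. F (\<lambda>v. if v \<in> K then t + z v else ret v)))
    = measure_pmf.expectation (belief t (\<lambda>v. \<beta> v \<and> v \<notin> K) c) F"
proof -
  have "measure_pmf.expectation (belief t (\<lambda>v. \<beta> v \<and> v \<notin> K) c) F
      = measure_pmf.expectation (bind_pmf (belief t \<beta> c)
          (\<lambda>ret. map_pmf (\<lambda>z v. if v \<in> K then t + z v else ret v) (Pi_pmf K 0 (\<lambda>_. g)))) F"
    by (simp only: belief_notify[OF assms(1,2)])
  also have "\<dots> = measure_pmf.expectation (belief t \<beta> c) (\<lambda>ret. measure_pmf.expectation
      (map_pmf (\<lambda>z v. if v \<in> K then t + z v else ret v) (Pi_pmf K 0 (\<lambda>_. g))) F)"
    using assms(3) by (rule expectation_bind_pmf_bounded)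
  finally show ?thesis by simp
qed

lemma miss_card_active_sums:
  "(\<lambda>j. q * r ^ j * (\<Prod>v\<in>{1..n}. if \<beta> v then r else r + q * r ^ (j + s)))
    sums miss s (card_active \<beta>) (n - card_active \<beta>)"
  using miss_sums[of "card_active \<beta>" s "n - card_active \<beta>"]
  by (simp add: prod_if_const card_active_def mult.assoc)

lemma expectation_reactivate_prod:
  "measure_pmf.expectation (reactivate \<beta>) (\<lambda>\<beta>'. \<Prod>v\<in>{1..n}. if \<beta>' v then r else r + q * r ^ e)
    = (\<Prod>v\<in>{1..n}. if \<beta> v then r else r + q * r ^ Suc e)"
proof -
  have "0 \<le> r + q * r ^ e" using q_pos r_pos by simp
  moreover have "measure_pmf.expectation (if \<beta> v then return_pmf True else bernoulli_pmf q)
      (\<lambda>b. if b then r else r + q * r ^ e) = (if \<beta> v then r else r + q * r ^ Suc e)" for v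
    using q_pos q_lt_1 by (simp add: r_def algebra_simps)
  ultimately show ?thesis
    unfolding reactivate_def using r_pos
    by (subst expectation_prod_Pi_pmf) (auto intro!: integrable_measure_pmf_finite)
qed

lemma expectation_potential_reactivate:
  "measure_pmf.expectation (reactivate \<beta>) (\<lambda>\<beta>'. potential (card_active \<beta>'))
    = potential_next (card_active \<beta>)"
proof -
  let ?miss0 = "\<lambda>\<beta>'. miss 0 (card_active \<beta>') (n - card_active \<beta>')"
  have "(\<lambda>j. measure_pmf.expectation (reactivate \<beta>)
      (\<lambda>\<beta>'. q * r ^ j * (\<Prod>v\<in>{1..n}. if \<beta>' v then r else r + q * r ^ (j + 0))))
      sums measure_pmf.expectation (reactivate \<beta>) ?miss0"
    by (intro sums_expectation_finite_pmf finite_set_reactivate miss_card_active_sums)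
  moreover have "measure_pmf.expectation (reactivate \<beta>)
      (\<lambda>\<beta>'. q * r ^ j * (\<Prod>v\<in>{1..n}. if \<beta>' v then r else r + q * r ^ (j + 0)))
      = q * r ^ j * (\<Prod>v\<in>{1..n}. if \<beta> v then r else r + q * r ^ (j + 1))" for j
    unfolding integral_mult_right_zero add_0_right Suc_eq_plus1[symmetric]
    by (simp only: expectation_reactivate_prod)
  ultimately have "(\<lambda>j. q * r ^ j * (\<Prod>v\<in>{1..n}. if \<beta> v then r else r + q * r ^ (j + 1)))
      sums measure_pmf.expectation (reactivate \<beta>) ?miss0"
    by (simp only:)
  then have "measure_pmf.expectation (reactivate \<beta>) ?miss0 = miss 1 (card_active \<beta>) (n - card_active \<beta>)"
    using miss_card_active_sums sums_unique2 by blast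
  then show ?thesis
    unfolding potential_def potential_next_def using finite_set_reactivate
    by (simp add: Bochner_Integration.integral_diff integrable_measure_pmf_finite)
qed

lemma abs_notify_value_le: "\<bar>notify_value k t N A ret h\<bar> \<le> 1 + real k"
  unfolding notify_value_def
  by (intro abs_expectation_pmf_le order_trans[OF abs_triangle_ineq] add_mono abs_completions_le) auto

lemma expectation_completions_Suc:
  assumes "t \<noteq> 1"
  shows "measure_pmf.expectation (belief t \<beta> c) (\<lambda>ret. completions (Suc k) t ret h)
    = q * measure_pmf.expectation (belief t \<beta> c)
          (\<lambda>ret. notify_value k t (pol h 1 \<inter> {1..n}) {v \<in> pol h 1 \<inter> {1..n}. ret v \<le> t} ret h)
      + (1 - q) * measure_pmf.expectation (belief t \<beta> c) (\<lambda>ret. completions k (Suc t) ret (h @ [None]))"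
proof -
  have "integrable (measure_pmf (belief t \<beta> c)) (\<lambda>ret. notify_value k t N (A ret) ret h')" for N A h'
    by (rule integrable_measure_pmf_bounded) (rule abs_notify_value_le)
  moreover have "integrable (measure_pmf (belief t \<beta> c)) (\<lambda>ret. completions k t' ret h')" for t' h'
    by (rule integrable_measure_pmf_bounded) (rule abs_completions_le)
  ultimately show ?thesis
    unfolding completions_Suc using assms by (subst Bochner_Integration.integral_add) auto
qed

definition potential_bound :: "nat \<Rightarrow> nat \<Rightarrow> bool" where
  "potential_bound k t \<longleftrightarrow> (\<forall>\<beta> c h. (\<forall>v. \<beta> v \<longrightarrow> c v \<le> t) \<longrightarrow>
     measure_pmf.expectation (belief t \<beta> c) (\<lambda>ret. completions k t ret h)
       \<le> gain * real k + potential (card_active \<beta>))"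

lemma expectation_no_arrival_le:
  assumes IH: "potential_bound k (Suc t)" and known: "\<And>v. \<beta> v \<Longrightarrow> c v \<le> t"
  shows "measure_pmf.expectation (belief t \<beta> c) (\<lambda>ret. completions k (Suc t) ret h)
    \<le> gain * real k + potential_next (card_active \<beta>)"
proof -
  let ?c' = "\<lambda>v. if \<beta> v then c v else Suc t"
  have "measure_pmf.expectation (belief t \<beta> c) (\<lambda>ret. completions k (Suc t) ret h)
      = measure_pmf.expectation (reactivate \<beta>)
          (\<lambda>\<beta>'. measure_pmf.expectation (belief (Suc t) \<beta>' ?c') (\<lambda>ret. completions k (Suc t) ret h))"
    unfolding belief_Suc[of t \<beta> c] by (rule expectation_bind_pmf_bounded) (rule abs_completions_le)
  also have "\<dots> \<le> measure_pmf.expectation (reactivate \<beta>) (\<lambda>\<beta>'. gain * real k + potential (card_active \<beta>'))"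
  proof (intro integral_mono integrable_measure_pmf_finite finite_set_reactivate)
    fix \<beta>'
    show "measure_pmf.expectation (belief (Suc t) \<beta>' ?c') (\<lambda>ret. completions k (Suc t) ret h)
        \<le> gain * real k + potential (card_active \<beta>')"
      by (rule IH[unfolded potential_bound_def, rule_format]) (use known in \<open>simp add: le_SucI\<close>)
  qed
  also have "\<dots> = gain * real k + potential_next (card_active \<beta>)"
    using finite_set_reactivate
    by (subst Bochner_Integration.integral_add)
      (auto intro: integrable_measure_pmf_finite simp: expectation_potential_reactivate)
  finally show ?thesis .
qed

lemma card_active_remove:
  assumes "finite K" "K \<subseteq> {v \<in> {1..n}. \<beta> v}"
  shows "card_active (\<lambda>v. \<beta> v \<and> v \<notin> K) = card_active \<beta> - card K"
proof -
  have "{v \<in> {1..n}. \<beta> v \<and> v \<notin> K} = {v \<in> {1..n}. \<beta> v} - K" by auto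
  then show ?thesis using assms by (simp add: card_active_def card_Diff_subset)
qed

lemma expectation_notify_value_eq:
  assumes known: "\<And>v. \<beta> v \<Longrightarrow> c v \<le> t" and N: "N \<subseteq> {1..n}"
  defines "K \<equiv> {v \<in> N. \<beta> v}"
  shows "measure_pmf.expectation (belief t \<beta> c) (\<lambda>ret. notify_value k t N {v \<in> N. ret v \<le> t} ret h)
    = measure_pmf.expectation (Pi_pmf K False (\<lambda>v. bernoulli_pmf q))
        (\<lambda>b. (if {v \<in> K. b v} = {} then 0 else 1) + measure_pmf.expectation (belief t (\<lambda>v. \<beta> v \<and> v \<notin> K) c)
          (\<lambda>ret. completions k (Suc t) ret (h @ [Some (1, N, {v \<in> K. b v})])))"
proof -
  define hit where "hit b = (if {v \<in> K. b v} = {} then 0 else (1::real))" for b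
  define after where "after b ret = completions k (Suc t) ret (h @ [Some (1, N, {v \<in> K. b v})])" for b ret
  let ?B = "Pi_pmf K False (\<lambda>v. bernoulli_pmf q)" and ?Z = "Pi_pmf K 0 (\<lambda>v. g)"
  let ?shift = "\<lambda>z ret v. if v \<in> K then t + z v else ret v"
  have K: "K \<subseteq> {1..n}" "\<And>v. v \<in> K \<Longrightarrow> \<beta> v" using N by (auto simp: K_def)
  have active_K: "{v \<in> N. ret v \<le> t} = K" if "ret \<in> set_pmf (belief t \<beta> c)" for ret
    using belief_active_iff[OF that known] N by (auto simp: K_def)
  have after_Z: "\<bar>measure_pmf.expectation ?Z (\<lambda>z. after b (F z))\<bar> \<le> real k" for b F
    unfolding after_def by (intro abs_expectation_pmf_le abs_completions_le)
  have bound: "\<bar>hit b + measure_pmf.expectation ?Z (\<lambda>z. after b (F z))\<bar> \<le> 1 + real k" for b F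
    using after_Z[of b F] by (auto simp: hit_def)
  have "measure_pmf.expectation (belief t \<beta> c) (\<lambda>ret. notify_value k t N {v \<in> N. ret v \<le> t} ret h)
      = measure_pmf.expectation (belief t \<beta> c) (\<lambda>ret. measure_pmf.expectation ?B
          (\<lambda>b. hit b + measure_pmf.expectation ?Z (\<lambda>z. after b (?shift z ret))))"
    by (intro integral_cong_AE AE_pmfI) (simp_all add: active_K notify_value_def hit_def after_def)
  also have "\<dots> = measure_pmf.expectation ?B (\<lambda>b. measure_pmf.expectation (belief t \<beta> c)
      (\<lambda>ret. hit b + measure_pmf.expectation ?Z (\<lambda>z. after b (?shift z ret))))"
    using bound by (rule expectation_pmf_swap)
  also have "\<dots> = measure_pmf.expectation ?B
      (\<lambda>b. hit b + measure_pmf.expectation (belief t (\<lambda>v. \<beta> v \<and> v \<notin> K) c) (after b))"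
  proof (intro Bochner_Integration.integral_cong refl)
    fix b
    have "measure_pmf.expectation (belief t \<beta> c)
        (\<lambda>ret. hit b + measure_pmf.expectation ?Z (\<lambda>z. after b (?shift z ret)))
        = hit b + measure_pmf.expectation (belief t \<beta> c)
            (\<lambda>ret. measure_pmf.expectation ?Z (\<lambda>z. after b (?shift z ret)))"
      using after_Z by (rule expectation_const_add_pmf)
    also have "\<dots> = hit b + measure_pmf.expectation (belief t (\<lambda>v. \<beta> v \<and> v \<notin> K) c) (after b)"
      unfolding after_def
      by (rule arg_cong[where f = "(+) (hit b)"], rule expectation_belief_notify)
        (use K in \<open>auto intro: abs_completions_le\<close>)
    finally show "measure_pmf.expectation (belief t \<beta> c)
        (\<lambda>ret. hit b + measure_pmf.expectation ?Z (\<lambda>z. after b (?shift z ret)))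
        = hit b + measure_pmf.expectation (belief t (\<lambda>v. \<beta> v \<and> v \<notin> K) c) (after b)" .
  qed
  finally show ?thesis by (simp only: hit_def after_def[abs_def])
qed

lemma expectation_notify_value_le:
  assumes IH: "potential_bound k (Suc t)" and known: "\<And>v. \<beta> v \<Longrightarrow> c v \<le> t" and N: "N \<subseteq> {1..n}"
  defines "K \<equiv> {v \<in> N. \<beta> v}"
  shows "measure_pmf.expectation (belief t \<beta> c) (\<lambda>ret. notify_value k t N {v \<in> N. ret v \<le> t} ret h)
    \<le> 1 - r ^ card K + gain * real k + potential_next (card_active \<beta> - card K)"
proof -
  let ?B = "Pi_pmf K False (\<lambda>v. bernoulli_pmf q)"
  let ?hit = "\<lambda>b. if {v \<in> K. b v} = {} then 0 else (1::real)"
  let ?rest = "gain * real k + potential_next (card_active (\<lambda>v. \<beta> v \<and> v \<notin> K))"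
  have K: "finite K" "K \<subseteq> {v \<in> {1..n}. \<beta> v}" using N by (auto simp: K_def finite_subset)
  have fin_B: "finite (set_pmf ?B)" using K(1) by (simp add: set_Pi_pmf finite_PiE_dflt)
  have "measure_pmf.expectation (belief t \<beta> c) (\<lambda>ret. notify_value k t N {v \<in> N. ret v \<le> t} ret h)
      = measure_pmf.expectation ?B (\<lambda>b. ?hit b + measure_pmf.expectation (belief t (\<lambda>v. \<beta> v \<and> v \<notin> K) c)
          (\<lambda>ret. completions k (Suc t) ret (h @ [Some (1, N, {v \<in> K. b v})])))"
    unfolding K_def by (rule expectation_notify_value_eq[OF known N])
  also have "\<dots> \<le> measure_pmf.expectation ?B (\<lambda>b. ?rest + ?hit b)"
  proof (intro integral_mono integrable_measure_pmf_finite fin_B)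
    show "?hit b + measure_pmf.expectation (belief t (\<lambda>v. \<beta> v \<and> v \<notin> K) c)
        (\<lambda>ret. completions k (Suc t) ret (h @ [Some (1, N, {v \<in> K. b v})])) \<le> ?rest + ?hit b" for b
      using expectation_no_arrival_le[OF IH, of "\<lambda>v. \<beta> v \<and> v \<notin> K" c] known by simp
  qed
  also have "\<dots> = 1 - r ^ card K + ?rest"
    using K(1) q_pos q_lt_1 expectation_Pi_bernoulli_some[of K q]
    by (subst expectation_const_add_pmf[where B = 1]) (auto simp: r_def)
  finally show ?thesis using card_active_remove[OF K] by simp
qed

lemma potential_bound_holds: "2 \<le> t \<Longrightarrow> potential_bound k t"
proof (induction k arbitrary: t)
  case 0
  then show ?case by (simp add: potential_bound_def completions_def potential_nonneg)
next
  case (Suc k)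
  have IH: "potential_bound k (Suc t)" using Suc by simp
  show ?case unfolding potential_bound_def
  proof (intro allI impI)
    fix \<beta> :: "nat \<Rightarrow> bool" and c :: "nat \<Rightarrow> nat" and h :: history
    assume "\<forall>v. \<beta> v \<longrightarrow> c v \<le> t"
    then have known: "\<And>v. \<beta> v \<Longrightarrow> c v \<le> t" by blast
    define N where "N = pol h 1 \<inter> {1..n}"
    define K where "K = {v \<in> N. \<beta> v}"
    have "card K \<le> card_active \<beta>" unfolding K_def N_def card_active_def by (intro card_mono) auto
    have "measure_pmf.expectation (belief t \<beta> c) (\<lambda>ret. completions (Suc k) t ret h)
        = q * measure_pmf.expectation (belief t \<beta> c) (\<lambda>ret. notify_value k t N {v \<in> N. ret v \<le> t} ret h)
          + (1 - q) * measure_pmf.expectation (belief t \<beta> c) (\<lambda>ret. completions k (Suc t) ret (h @ [None]))"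
      unfolding N_def using Suc.prems by (intro expectation_completions_Suc) simp
    also have "\<dots> \<le> q * (1 - r ^ card K + gain * real k + potential_next (card_active \<beta> - card K))
        + (1 - q) * (gain * real k + potential_next (card_active \<beta>))"
      using q_pos q_lt_1 unfolding K_def
      by (intro add_mono mult_left_mono expectation_notify_value_le expectation_no_arrival_le IH known)
        (auto simp: N_def)
    also have "\<dots> = gain * real k + (q * (1 - r ^ card K + potential_next (card_active \<beta> - card K))
        + (1 - q) * potential_next (card_active \<beta>))"
      by (simp add: algebra_simps)
    also have "\<dots> \<le> gain * real (Suc k) + potential (card_active \<beta>)"
      using bellman_inequality[OF \<open>card K \<le> card_active \<beta>\<close> card_active_le] by (simp add: algebra_simps)
    finally show "measure_pmf.expectation (belief t \<beta> c) (\<lambda>ret. completions (Suc k) t ret h)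
        \<le> gain * real (Suc k) + potential (card_active \<beta>)" .
  qed
qed

lemma completions_from_start_le:
  "completions (Suc (n\<^sup>2)) 1 (\<lambda>_. 0) [] \<le> 1 - r ^ n + (real n + 1) * (1 - miss 1 0 n)"
proof -
  define N where "N = pol [] 1 \<inter> {1..n}"
  have N: "N \<subseteq> {1..n}" by (simp add: N_def)
  have card_N: "card N \<le> n" using card_mono[OF _ N] by simp
  have "completions (Suc (n\<^sup>2)) 1 (\<lambda>_. 0) []
      = measure_pmf.expectation (belief 1 (\<lambda>_. True) (\<lambda>_. 0))
          (\<lambda>ret. notify_value (n\<^sup>2) 1 N {v \<in> N. ret v \<le> 1} ret [])"
    by (simp add: completions_Suc belief_def N_def)
  also have "\<dots> \<le> 1 - r ^ card N + gain * real (n\<^sup>2) + potential_next (n - card N)"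
  proof -
    have "potential_bound (n\<^sup>2) (Suc 1)" by (rule potential_bound_holds) simp
    moreover have "{v \<in> {1..n}. True} = {1..n}" by auto
    then have "card_active (\<lambda>_. True) = n" unfolding card_active_def by simp
    ultimately show ?thesis
      using expectation_notify_value_le[of "n\<^sup>2" 1 "\<lambda>_. True" "\<lambda>_. 0" N] N by simp
  qed
  also have "\<dots> \<le> 1 - r ^ n + gain * real (n\<^sup>2) + potential_next 0"
    using miss_one_drop_le[of "n - card N"] card_N by (simp add: potential_next_def)
  also have "gain * real (n\<^sup>2) = real n * (1 - miss 1 0 n)"
    using n_mult_q by (simp add: gain_def power2_eq_square mult.commute)
  finally show ?thesis by (simp add: potential_next_def algebra_simps)
qed

lemma sum_lam_geometric: "1 \<le> t \<Longrightarrow> (\<Sum>\<tau>\<in>{1..t}. lam 1 \<tau> * r ^ (t - \<tau>)) = 1"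
proof (induction t rule: dec_induct)
  case (step t)
  have "(\<Sum>\<tau>\<in>{1..Suc t}. lam 1 \<tau> * r ^ (Suc t - \<tau>))
      = r * (\<Sum>\<tau>\<in>{1..t}. lam 1 \<tau> * r ^ (t - \<tau>)) + lam 1 (Suc t)"
    using step.hyps by (simp add: sum_distrib_left Suc_diff_le mult_ac)
  then show ?case using step q_plus_r by simp
qed simp

lemma LP_instance_eq: "LP n 1 (n\<^sup>2 + 1) lam (\<lambda>v s. q) g = real n + 1"
proof -
  let ?values = "{lp_obj n 1 (n\<^sup>2 + 1) lam (\<lambda>v s. q) x | x. lp_feasible n 1 (n\<^sup>2 + 1) lam g x}"
  have sum_lam: "(\<Sum>t\<in>{1..n\<^sup>2 + 1}. lam 1 t) = real n + 1"
  proof -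
    have "(\<Sum>t\<in>{1..n\<^sup>2 + 1}. lam 1 t) = lam 1 1 + (\<Sum>t\<in>{Suc 1..n\<^sup>2 + 1}. q)"
      by (subst sum.atLeast_Suc_atMost) (auto intro!: sum.cong)
    also have "\<dots> = 1 + real n * (real n * q)" by (simp add: power2_eq_square)
    finally show ?thesis using n_mult_q by simp
  qed
  have "lp_feasible n 1 (n\<^sup>2 + 1) lam g (\<lambda>v s t. 1)"
    unfolding lp_feasible_def using sum_lam_geometric by (auto simp: cdfG_g)
  moreover have "lp_obj n 1 (n\<^sup>2 + 1) lam (\<lambda>v s. q) (\<lambda>v s t. 1) = real n + 1"
    using n_mult_q sum_lam by (simp add: lp_obj_def)
  ultimately have "real n + 1 \<in> ?values" by force
  moreover have "y \<le> real n + 1" if "y \<in> ?values" for y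
  proof -
    from that obtain x where y: "y = lp_obj n 1 (n\<^sup>2 + 1) lam (\<lambda>v s. q) x" by blast
    have "y \<le> (\<Sum>t\<in>{1..n\<^sup>2 + 1}. lam 1 t)"
      unfolding y lp_obj_def using lam_bounds by (intro sum_mono) (simp add: mult_left_le)
    then show ?thesis using sum_lam by simp
  qed
  ultimately show ?thesis unfolding LP_def by (intro cSup_eq_maximum) auto
qed

end

theorem lemma5:
  fixes n :: nat and q :: real and g :: "nat pmf" and pol :: policy
  assumes "n \<ge> 2"
    and "q = 1 / real n"
    and "\<And>\<tau>. \<tau> \<ge> 1 \<Longrightarrow> pmf g \<tau> = q * (1 - q) ^ (\<tau> - 1)"
  shows "expected_completed n 1 (n^2 + 1) (\<lambda>s t. if t = 1 then 1 else q) (\<lambda>v s. q) g pol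
         \<le> (1 + q - (q * (1 - q)) / (ln (1 / (1 - q)) * (1 + q)) * (1 - exp (-1)))
           * LP n 1 (n^2 + 1) (\<lambda>s t. if t = 1 then 1 else q) (\<lambda>v s. q) g"
proof -
  interpret volunteer_instance n q g pol
    using assms by unfold_locales auto
  have "expected_completed n 1 (n^2 + 1) lam (\<lambda>v s. q) g pol = completions (Suc (n\<^sup>2)) 1 (\<lambda>_. 0) []"
    by (simp add: expected_completed_def completions_def)
  also have "\<dots> \<le> 1 - r ^ n + (real n + 1) * (1 - miss 1 0 n)"
    by (rule completions_from_start_le)
  also have "\<dots> \<le> (1 + q - (q * (1 - q)) / (ln (1 / (1 - q)) * (1 + q)) * (1 - exp (-1))) * (real n + 1)"
    by (rule completions_bound_le_ratio)
  also have "real n + 1 = LP n 1 (n^2 + 1) lam (\<lambda>v s. q) g"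
    by (rule LP_instance_eq[symmetric])
  finally show ?thesis .
qed

end
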